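(* Let $Z$ be a compact Hausdorff space containing (as a subspace) a homeomorphic copy of the one-point compactification of an uncountable discrete space, and let $n\in\mathbb{Z}_{>0}$. Then for every $d$ with $2\le d\le n$, the subspace $$Z_{(d)}:=\{\mathbf z\subseteq Z:\ |\mathbf z|=d\}\subseteq Z_{[n]}$$ (the stratum of $Z_{[n]}$ consisting of the points whose fiber under $\pi:Z_{[n]}^{\subseteq}\to Z_{[n]}$ has exactly $d$ elements) is not a normal topological space.
   Context: $Z_{[n]}:=\{\mathbf z\subseteq Z:\ 1\le|\mathbf z|\le n\}$ carries the quotient topology from $Z^n$ via $(z_i)_i\mapsto\{z_i\}_i$ (equivalently the Vietoris topology); $Z_{[n]}^{\subseteq}:=\{(z,x)\in Z\times Z_{[n]}: z\in x\}$ and $\pi$ is the second projection. A space is normal if any two disjoint closed subsets have disjoint open neighborhoods. *)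

theory Defs
  imports "HOL-Analysis.Analysis"
begin

text \<open>One-point (Alexandroff) compactification of a topological space X, on the carrier
  Some ` topspace X plus the point at infinity None. Open sets: images of open sets of X,
  and complements (containing None) of closed compact subsets of X.\<close>
definition alexandroff :: "'a topology \<Rightarrow> 'a option topology" where
  "alexandroff X = topology (\<lambda>V.
      (\<exists>U. openin X U \<and> V = Some ` U) \<or>
      (\<exists>C. compactin X C \<and> closedin X C \<and> V = insert None (Some ` (topspace X - C))))"

definition finset_of :: "nat \<Rightarrow> (nat \<Rightarrow> 'a) \<Rightarrow> 'a set" where
  "finset_of n f = f ` {..<n}"

text \<open>Z_[n] with the quotient topology from Z^n (product topology) under finset_of n.\<close>
definition finset_space :: "'a topology \<Rightarrow> nat \<Rightarrow> 'a set topology" where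
  "finset_space X n = topology (\<lambda>U.
      U \<subseteq> finset_of n ` topspace (product_topology (\<lambda>i. X) {..<n}) \<and>
      openin (product_topology (\<lambda>i. X) {..<n})
        {f \<in> topspace (product_topology (\<lambda>i. X) {..<n}). finset_of n f \<in> U})"

definition stratum :: "'a topology \<Rightarrow> nat \<Rightarrow> nat \<Rightarrow> 'a set topology" where
  "stratum X n d = subtopology (finset_space X n) {z. z \<subseteq> topspace X \<and> finite z \<and> card z = d}"

end

theory Submission
  imports Defs
begin

(* The embedded one-point compactification provides a point p of Z and an injective family
   (e b), b \<in> D, tending to p along the cofinite filter. Fix a set R of d - 2 of these points
   and split the remaining indices into a countably infinite D1 and an uncountable D2. The
   d-element sets between R \<union> {p} and R \<union> {p} \<union> e(D1), resp. e(D2), form disjoint closed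
   subsets of Z_(d). If W1, W2 were separating open sets, continuity of t \<mapsto> {t, e x} \<union> R at p
   puts {e x, e y} \<union> R into W1 for each x \<in> D1 and all but finitely many y, and symmetrically
   for W2; since D2 is not a countable union of finite sets, some {e x, e y} \<union> R lies in
   both, as in the Tychonoff plank. *)

lemma alexandroff_open_cases_iff:
  "(\<exists>U. openin X U \<and> V = Some ` U) \<or>
     (\<exists>C. compactin X C \<and> closedin X C \<and> V = insert None (Some ` (topspace X - C))) \<longleftrightarrow>
   V \<subseteq> insert None (Some ` topspace X) \<and> openin X (Some -` V) \<and>
     (None \<in> V \<longrightarrow> compactin X (topspace X - Some -` V))"
  (is "?cases \<longleftrightarrow> ?vimage")
proof
  assume ?vimage
  then have V: "V \<subseteq> insert None (Some ` topspace X)" "openin X (Some -` V)"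
    and cpt: "None \<in> V \<Longrightarrow> compactin X (topspace X - Some -` V)"
    by auto
  show ?cases
  proof (cases "None \<in> V")
    case True
    have "V = insert None (Some ` (topspace X - (topspace X - Some -` V)))"
      using True V(1) by (auto simp: image_iff)
    then show ?thesis
      using True V(2) cpt by (metis Diff_Diff_Int closedin_diff closedin_topspace)
  next
    case False
    then have "V = Some ` (Some -` V)"
      by (auto simp: image_iff) (metis option.exhaust)
    then show ?thesis
      using V(2) by blast
  qed
next
  assume ?cases
  then show ?vimage
  proof (elim disjE exE conjE)
    fix U
    assume "openin X U" "V = Some ` U"
    then show ?vimage
      using openin_subset by (fastforce simp: inj_vimage_image_eq)
  next
    fix C
    assume "compactin X C" "closedin X C" "V = insert None (Some ` (topspace X - C))"
    moreover have "Some -` V = topspace X - C"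
      using \<open>V = _\<close> by auto
    ultimately show ?vimage
      using compactin_subset_topspace by (fastforce simp: Diff_Diff_Int inf_absorb2)
  qed
qed

lemma istopology_alexandroff:
  "istopology (\<lambda>V. V \<subseteq> insert None (Some ` topspace X) \<and> openin X (Some -` V) \<and>
     (None \<in> V \<longrightarrow> compactin X (topspace X - Some -` V)))"
  unfolding istopology_def
proof (rule conjI; intro allI impI)
  fix S T :: "'a option set"
  assume "S \<subseteq> insert None (Some ` topspace X) \<and> openin X (Some -` S) \<and>
      (None \<in> S \<longrightarrow> compactin X (topspace X - Some -` S))"
    and "T \<subseteq> insert None (Some ` topspace X) \<and> openin X (Some -` T) \<and>
      (None \<in> T \<longrightarrow> compactin X (topspace X - Some -` T))"
  then show "S \<inter> T \<subseteq> insert None (Some ` topspace X) \<and> openin X (Some -` (S \<inter> T)) \<and>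
      (None \<in> S \<inter> T \<longrightarrow> compactin X (topspace X - Some -` (S \<inter> T)))"
    by (auto simp: Diff_Int compactin_Un)
next
  fix \<K> :: "'a option set set"
  assume \<K>: "\<forall>K\<in>\<K>. K \<subseteq> insert None (Some ` topspace X) \<and> openin X (Some -` K) \<and>
      (None \<in> K \<longrightarrow> compactin X (topspace X - Some -` K))"
  have "openin X (Some -` \<Union>\<K>)"
    using \<K> by (auto simp: vimage_Union)
  moreover have "compactin X (topspace X - Some -` \<Union>\<K>)" if "None \<in> K" "K \<in> \<K>" for K
    by (rule closed_compactin[of X "topspace X - Some -` K"])
       (use that \<K> \<open>openin X (Some -` \<Union>\<K>)\<close> in auto)
  ultimately show "\<Union>\<K> \<subseteq> insert None (Some ` topspace X) \<and> openin X (Some -` \<Union>\<K>) \<and>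
      (None \<in> \<Union>\<K> \<longrightarrow> compactin X (topspace X - Some -` \<Union>\<K>))"
    using \<K> by auto
qed

lemma openin_alexandroff:
  "openin (alexandroff X) V \<longleftrightarrow>
     V \<subseteq> insert None (Some ` topspace X) \<and> openin X (Some -` V) \<and>
     (None \<in> V \<longrightarrow> compactin X (topspace X - Some -` V))"
proof -
  have "alexandroff X = topology (\<lambda>V. V \<subseteq> insert None (Some ` topspace X) \<and>
      openin X (Some -` V) \<and> (None \<in> V \<longrightarrow> compactin X (topspace X - Some -` V)))"
    by (simp only: alexandroff_def alexandroff_open_cases_iff)
  then show ?thesis
    by (simp only: topology_inverse'[OF istopology_alexandroff])
qed

lemma topspace_alexandroff: "topspace (alexandroff X) = insert None (Some ` topspace X)"
proof -
  have "Some -` insert None (Some ` topspace X) = topspace X"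
    by auto
  then have "openin (alexandroff X) (insert None (Some ` topspace X))"
    by (simp add: openin_alexandroff)
  then have "insert None (Some ` topspace X) \<subseteq> topspace (alexandroff X)"
    by (rule openin_subset)
  moreover have "topspace (alexandroff X) \<subseteq> insert None (Some ` topspace X)"
    using openin_topspace[of "alexandroff X"] unfolding openin_alexandroff by (rule conjunct1)
  ultimately show ?thesis
    by blast
qed

lemma eventually_cofinite_principal:
  "eventually P (inf cofinite (principal D)) \<longleftrightarrow> finite {x \<in> D. \<not> P x}"
  by (simp add: eventually_inf_principal eventually_cofinite conj_commute)

lemma limitin_alexandroff_discrete:
  "limitin (alexandroff (discrete_topology D)) Some None (inf cofinite (principal D))"
proof -
  have "finite {x \<in> D. Some x \<notin> V}" if "openin (alexandroff (discrete_topology D)) V" "None \<in> V" for V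
  proof -
    have "compactin (discrete_topology D) (D - Some -` V)"
      using that by (simp add: openin_alexandroff)
    then show ?thesis
      by (simp add: compactin_discrete_topology set_diff_eq)
  qed
  then show ?thesis
    by (simp add: limitin_def topspace_alexandroff eventually_cofinite_principal)
qed

lemma alexandroff_discrete_embedding:
  assumes "subtopology X S homeomorphic_space alexandroff (discrete_topology D)"
  obtains p e where "inj_on e D" "e ` D \<subseteq> topspace X" "p \<notin> e ` D"
    "limitin X e p (inf cofinite (principal D))"
proof -
  let ?A = "alexandroff (discrete_topology D)"
  obtain f g where fg: "homeomorphic_maps (subtopology X S) ?A f g"
    using assms by (auto simp: homeomorphic_space_def)
  then have g: "continuous_map ?A X g"
    by (auto simp: homeomorphic_maps_def continuous_map_in_subtopology)
  have "inj_on g (topspace ?A)"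
    using fg unfolding homeomorphic_maps_def by (metis inj_on_inverseI)
  then have "inj_on (g \<circ> Some) D" "g None \<notin> (g \<circ> Some) ` D"
    by (auto simp: topspace_alexandroff inj_on_def)
  moreover have "(g \<circ> Some) ` D \<subseteq> topspace X"
    using continuous_map_image_subset_topspace[OF g] by (auto simp: topspace_alexandroff)
  moreover have "limitin X (g \<circ> Some) (g None) (inf cofinite (principal D))"
    by (rule continuous_map_limit[OF g limitin_alexandroff_discrete])
  ultimately show ?thesis
    using that by blast
qed

lemma compactin_insert_limit_image:
  assumes lim: "limitin X e p (inf cofinite (principal D))"
    and "e ` D \<subseteq> topspace X" and "E \<subseteq> D"
  shows "compactin X (insert p (e ` E))"
  unfolding compactin_def
proof (intro conjI allI impI)
  show "insert p (e ` E) \<subseteq> topspace X"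
    using assms(2,3) limitin_topspace[OF lim] by blast
  fix \<U>
  assume \<U>: "Ball \<U> (openin X) \<and> insert p (e ` E) \<subseteq> \<Union>\<U>"
  then obtain B where B: "B \<in> \<U>" "p \<in> B"
    by blast
  then have "eventually (\<lambda>b. e b \<in> B) (inf cofinite (principal D))"
    using \<U> by (blast intro: limitinD[OF lim])
  then have "finite {b \<in> D. e b \<notin> B}"
    by (simp add: eventually_cofinite_principal)
  then have fin: "finite {b \<in> E. e b \<notin> B}"
    by (rule finite_subset[rotated]) (use \<open>E \<subseteq> D\<close> in auto)
  have "\<forall>b \<in> {b \<in> E. e b \<notin> B}. \<exists>W. W \<in> \<U> \<and> e b \<in> W"
    using \<U> by blast
  from bchoice[OF this] obtain V where V: "\<forall>b \<in> {b \<in> E. e b \<notin> B}. V b \<in> \<U> \<and> e b \<in> V b"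
    by blast
  have "finite (insert B (V ` {b \<in> E. e b \<notin> B}))"
    using fin by simp
  moreover have "insert B (V ` {b \<in> E. e b \<notin> B}) \<subseteq> \<U>"
    using B V by blast
  moreover have "insert p (e ` E) \<subseteq> \<Union> (insert B (V ` {b \<in> E. e b \<notin> B}))"
    using B V by blast
  ultimately show "\<exists>\<F>. finite \<F> \<and> \<F> \<subseteq> \<U> \<and> insert p (e ` E) \<subseteq> \<Union>\<F>"
    by blast
qed

lemma quotient_map_topology:
  "quotient_map X (topology (\<lambda>U. U \<subseteq> f ` topspace X \<and> openin X {x \<in> topspace X. f x \<in> U})) f"
proof -
  define Q where "Q = (\<lambda>U. U \<subseteq> f ` topspace X \<and> openin X {x \<in> topspace X. f x \<in> U})"
  have "istopology Q"
    unfolding istopology_def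
  proof (intro conjI allI impI)
    fix S T
    assume "Q S" "Q T"
    moreover have "{x \<in> topspace X. f x \<in> S \<inter> T} =
        {x \<in> topspace X. f x \<in> S} \<inter> {x \<in> topspace X. f x \<in> T}"
      by blast
    ultimately show "Q (S \<inter> T)"
      by (auto simp: Q_def)
  next
    fix \<K>
    assume "\<forall>K\<in>\<K>. Q K"
    moreover have "{x \<in> topspace X. f x \<in> \<Union>\<K>} = (\<Union>K\<in>\<K>. {x \<in> topspace X. f x \<in> K})"
      by blast
    ultimately show "Q (\<Union>\<K>)"
      by (auto simp: Q_def)
  qed
  then have opn: "openin (topology Q) = Q"
    by simp
  have "{x \<in> topspace X. f x \<in> f ` topspace X} = topspace X"
    by blast
  then have "Q (f ` topspace X)"
    by (simp add: Q_def)
  then have "openin (topology Q) (f ` topspace X)"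
    by (simp add: opn)
  then have "f ` topspace X \<subseteq> topspace (topology Q)"
    by (rule openin_subset)
  moreover have "Q (topspace (topology Q))"
    using openin_topspace[of "topology Q"] by (simp only: opn)
  then have "topspace (topology Q) \<subseteq> f ` topspace X"
    by (simp add: Q_def)
  ultimately have "topspace (topology Q) = f ` topspace X"
    by blast
  then have "quotient_map X (topology Q) f"
    by (simp add: quotient_map_def opn) (simp add: Q_def)
  then show ?thesis
    unfolding Q_def .
qed

lemma quotient_map_finset_of:
  "quotient_map (product_topology (\<lambda>i. X) {..<n}) (finset_space X n) (finset_of n)"
  unfolding finset_space_def by (rule quotient_map_topology)

lemma closedin_finset_space_iff:
  assumes "C \<subseteq> topspace (finset_space X n)"
  shows "closedin (finset_space X n) C \<longleftrightarrow>
    closedin (product_topology (\<lambda>i. X) {..<n})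
      {f \<in> topspace (product_topology (\<lambda>i. X) {..<n}). finset_of n f \<in> C}"
  using quotient_map_finset_of[of X n] assms by (simp add: quotient_map_closedin)

lemma closedin_finset_space_subset:
  assumes "closedin X K"
  shows "closedin (finset_space X n) {z \<in> topspace (finset_space X n). z \<subseteq> K}"
proof -
  have surj: "finset_of n ` topspace (product_topology (\<lambda>i. X) {..<n}) = topspace (finset_space X n)"
    using quotient_imp_surjective_map[OF quotient_map_finset_of] .
  have "{f \<in> topspace (product_topology (\<lambda>i. X) {..<n}).
          finset_of n f \<in> {z \<in> topspace (finset_space X n). z \<subseteq> K}} =
        {f \<in> topspace (product_topology (\<lambda>i. X) {..<n}). \<forall>i<n. f i \<in> K}"
    using surj by (auto simp: finset_of_def)
  also have "\<dots> = (\<Pi>\<^sub>E i\<in>{..<n}. K)"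
    using closedin_subset[OF assms] by (auto simp: PiE_iff extensional_def)
  finally show ?thesis
    using assms by (simp add: closedin_finset_space_iff closedin_product_topology)
qed

lemma closedin_finset_space_member:
  assumes "closedin X {q}"
  shows "closedin (finset_space X n) {z \<in> topspace (finset_space X n). q \<in> z}"
proof -
  let ?P = "product_topology (\<lambda>i. X) {..<n}"
  have surj: "finset_of n ` topspace ?P = topspace (finset_space X n)"
    using quotient_imp_surjective_map[OF quotient_map_finset_of] .
  have "{f \<in> topspace ?P. finset_of n f \<in> {z \<in> topspace (finset_space X n). q \<in> z}} =
        (\<Union>i<n. {f \<in> topspace ?P. f i \<in> {q}})"
    using surj by (auto simp: finset_of_def)
  moreover have "closedin ?P {f \<in> topspace ?P. f i \<in> {q}}" if "i < n" for i
    using that assms continuous_map_product_projection[of i "{..<n}" "\<lambda>i. X"]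
    by (intro closedin_continuous_map_preimage) auto
  then have "closedin ?P (\<Union>i<n. {f \<in> topspace ?P. f i \<in> {q}})"
    by (intro closedin_Union) auto
  ultimately show ?thesis
    by (simp add: closedin_finset_space_iff)
qed

lemma closedin_finset_space_between:
  assumes "closedin X K" "\<And>q. q \<in> Q \<Longrightarrow> closedin X {q}"
  shows "closedin (finset_space X n) {z \<in> topspace (finset_space X n). Q \<subseteq> z \<and> z \<subseteq> K}"
proof -
  have "{z \<in> topspace (finset_space X n). Q \<subseteq> z \<and> z \<subseteq> K} =
      \<Inter> (insert {z \<in> topspace (finset_space X n). z \<subseteq> K}
                 ((\<lambda>q. {z \<in> topspace (finset_space X n). q \<in> z}) ` Q))"
    by auto
  also have "closedin (finset_space X n) \<dots>"
    by (rule closedin_Inter)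
       (use assms in \<open>auto intro: closedin_finset_space_subset closedin_finset_space_member\<close>)
  finally show ?thesis .
qed

lemma continuous_map_insert_finset_space:
  assumes "finite A" "A \<subseteq> topspace X" "card A < n"
  shows "continuous_map X (finset_space X n) (\<lambda>t. insert t A)"
proof -
  obtain h where h: "bij_betw h {..<card A} A"
    using ex_bij_betw_nat_finite[OF \<open>finite A\<close>] by (auto simp: atLeast0LessThan)
  define F where "F t = (\<lambda>i\<in>{..<n}. if i < card A then h i else t)" for t
  have F: "continuous_map X (product_topology (\<lambda>i. X) {..<n}) F"
    unfolding continuous_map_componentwise
  proof (intro conjI ballI)
    fix i
    show "continuous_map X X (\<lambda>t. F t i)" if "i \<in> {..<n}"
      using that h assms(2) bij_betw_apply by (fastforce simp: F_def)
  qed (auto simp: F_def)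
  moreover have "finset_of n (F t) = insert t A" for t
  proof -
    have "{..<n} = {..<card A} \<union> {card A..<n}" "{card A..<n} \<noteq> {}"
      using assms(3) by auto
    then show ?thesis
      using bij_betw_imp_surj_on[OF h] by (auto simp: finset_of_def F_def)
  qed
  with continuous_map_compose[OF F quotient_imp_continuous_map[OF quotient_map_finset_of]]
  show ?thesis
    by (simp add: comp_def)
qed

lemma countable_uncountable_cofinite_pair:
  assumes "countable A" "infinite A" "uncountable B"
    and "\<And>x. x \<in> A \<Longrightarrow> finite {y \<in> B. \<not> P x y}"
    and "\<And>y. y \<in> B \<Longrightarrow> finite {x \<in> A. \<not> Q x y}"
  obtains x y where "x \<in> A" "y \<in> B" "P x y" "Q x y"
proof -
  have "countable (\<Union>x\<in>A. {y \<in> B. \<not> P x y})"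
    using assms(1,4) by (intro countable_UN) (auto intro: countable_finite)
  then have "uncountable (B - (\<Union>x\<in>A. {y \<in> B. \<not> P x y}))"
    by (rule uncountable_minus_countable[OF assms(3)])
  then have "B - (\<Union>x\<in>A. {y \<in> B. \<not> P x y}) \<noteq> {}"
    by (metis countable_empty)
  then obtain y where y: "y \<in> B" "\<And>x. x \<in> A \<Longrightarrow> P x y"
    by blast
  have "infinite (A - {x \<in> A. \<not> Q x y})"
    by (rule Diff_infinite_finite[OF assms(5)[OF y(1)] assms(2)])
  then obtain x where "x \<in> A" "Q x y"
    using infinite_imp_nonempty by blast
  then show ?thesis
    using that y by blast
qed

lemma topspace_stratum:
  "topspace (stratum X n d) =
     topspace (finset_space X n) \<inter> {z. z \<subseteq> topspace X \<and> finite z \<and> card z = d}"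
  by (simp add: stratum_def)

lemma insert_in_topspace_stratum:
  assumes "finite A" "A \<subseteq> topspace X" "card A < n" "t \<in> topspace X" "card (insert t A) = d"
  shows "insert t A \<in> topspace (stratum X n d)"
  using continuous_map_image_subset_topspace[OF continuous_map_insert_finset_space[OF assms(1-3)]]
    assms by (auto simp: stratum_def)

lemma closedin_stratum_between:
  assumes "closedin X K" "\<And>q. q \<in> Q \<Longrightarrow> closedin X {q}"
  shows "closedin (stratum X n d) {z \<in> topspace (stratum X n d). Q \<subseteq> z \<and> z \<subseteq> K}"
proof -
  let ?T = "{z. z \<subseteq> topspace X \<and> finite z \<and> card z = d}"
  have stratum: "stratum X n d = subtopology (finset_space X n) ?T"
    by (simp add: stratum_def)
  have "closedin (stratum X n d) (?T \<inter> {z \<in> topspace (finset_space X n). Q \<subseteq> z \<and> z \<subseteq> K})"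
    unfolding stratum by (rule closedin_subtopology_Int_closed[OF closedin_finset_space_between[OF assms]])
  moreover have "?T \<inter> {z \<in> topspace (finset_space X n). Q \<subseteq> z \<and> z \<subseteq> K} =
      {z \<in> topspace (stratum X n d). Q \<subseteq> z \<and> z \<subseteq> K}"
    unfolding stratum by auto
  ultimately show ?thesis
    by simp
qed

lemma finset_space_neighbourhoods_meet:
  assumes lim: "limitin X e p (inf cofinite (principal D))" and "e ` D \<subseteq> topspace X"
    and R: "finite R" "R \<subseteq> topspace X" "card R + 1 < n"
    and D1: "countable D1" "infinite D1" "D1 \<subseteq> D"
    and D2: "uncountable D2" "D2 \<subseteq> D"
    and W1: "openin (finset_space X n) W1" "\<And>x. x \<in> D1 \<Longrightarrow> insert p (insert (e x) R) \<in> W1"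
    and W2: "openin (finset_space X n) W2" "\<And>y. y \<in> D2 \<Longrightarrow> insert p (insert (e y) R) \<in> W2"
  obtains x y where "x \<in> D1" "y \<in> D2" "insert (e x) (insert (e y) R) \<in> W1 \<inter> W2"
proof -
  have cofinite: "finite {b \<in> D. insert (e b) (insert (e x) R) \<notin> W}"
    if "x \<in> D" "openin (finset_space X n) W" "insert p (insert (e x) R) \<in> W" for x W
  proof -
    have "continuous_map X (finset_space X n) (\<lambda>t. insert t (insert (e x) R))"
      using R \<open>e ` D \<subseteq> topspace X\<close> that(1)
      by (intro continuous_map_insert_finset_space) (auto simp: card_insert_if)
    from continuous_map_limit[OF this lim] that(2,3)
    have "eventually (\<lambda>b. insert (e b) (insert (e x) R) \<in> W) (inf cofinite (principal D))"
      by (auto dest: limitinD)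
    then show ?thesis
      by (simp add: eventually_cofinite_principal)
  qed
  obtain x y where "x \<in> D1" "y \<in> D2"
    "insert (e y) (insert (e x) R) \<in> W1" "insert (e x) (insert (e y) R) \<in> W2"
  proof (rule countable_uncountable_cofinite_pair[OF D1(1,2) D2(1)])
    show "finite {y \<in> D2. insert (e y) (insert (e x) R) \<notin> W1}" if "x \<in> D1" for x
      by (rule finite_subset[OF _ cofinite[OF _ W1(1) W1(2)[OF that]]]) (use that D1 D2 in auto)
    show "finite {x \<in> D1. insert (e x) (insert (e y) R) \<notin> W2}" if "y \<in> D2" for y
      by (rule finite_subset[OF _ cofinite[OF _ W2(1) W2(2)[OF that]]]) (use that D1 D2 in auto)
  qed
  then show ?thesis
    using that by (simp add: insert_commute)
qed

lemma disjnt_stratum_between: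
  assumes "finite Q" "card Q < d" "K1 \<inter> K2 \<subseteq> Q"
  shows "disjnt {z \<in> topspace (stratum X n d). Q \<subseteq> z \<and> z \<subseteq> K1}
                {z \<in> topspace (stratum X n d). Q \<subseteq> z \<and> z \<subseteq> K2}"
  unfolding disjnt_def
proof (intro equals0I)
  fix z
  assume z: "z \<in> {z \<in> topspace (stratum X n d). Q \<subseteq> z \<and> z \<subseteq> K1} \<inter>
                {z \<in> topspace (stratum X n d). Q \<subseteq> z \<and> z \<subseteq> K2}"
  then have "card z \<le> card Q"
    using assms(3) by (intro card_mono[OF assms(1)]) auto
  moreover have "card z = d"
    using z by (simp add: topspace_stratum)
  ultimately show False
    using assms(2) by simp
qed

lemma stratum_neighbourhoods_meet:
  assumes lim: "limitin X e p (inf cofinite (principal D))"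
    and e: "inj_on e D" "e ` D \<subseteq> topspace X" "p \<notin> e ` D"
    and P: "finite P" "P \<subseteq> D" "card P + 2 = d" "d \<le> n"
    and D1: "countable D1" "infinite D1" "D1 \<subseteq> D - P"
    and D2: "uncountable D2" "D2 \<subseteq> D - P" "D1 \<inter> D2 = {}"
    and U: "openin (stratum X n d) U"
      "{z \<in> topspace (stratum X n d). insert p (e ` P) \<subseteq> z \<and> z \<subseteq> insert p (e ` (P \<union> D1))} \<subseteq> U"
    and V: "openin (stratum X n d) V"
      "{z \<in> topspace (stratum X n d). insert p (e ` P) \<subseteq> z \<and> z \<subseteq> insert p (e ` (P \<union> D2))} \<subseteq> V"
  shows "U \<inter> V \<noteq> {}"
proof -
  define R where "R = e ` P"
  have R: "finite R" "R \<subseteq> topspace X" "card R + 2 = d" "p \<notin> R"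
    using P e by (auto simp: R_def card_image inj_on_subset)
  have fresh: "e x \<notin> R" "e x \<noteq> p" "e x \<in> topspace X" if "x \<in> D - P" for x
    using that e inj_on_image_mem_iff[OF e(1) _ P(2)] by (auto simp: R_def)
  have p: "p \<in> topspace X"
    using lim by (rule limitin_topspace)
  have in_stratum: "insert p (insert (e x) R) \<in> topspace (stratum X n d)" if "x \<in> D - P" for x
    using R P(4) fresh[OF that] p by (intro insert_in_topspace_stratum) auto
  define T where "T = {z. z \<subseteq> topspace X \<and> finite z \<and> card z = d}"
  obtain W1 W2 where W: "openin (finset_space X n) W1" "openin (finset_space X n) W2"
    "U = W1 \<inter> T" "V = W2 \<inter> T"
    using U(1) V(1) by (auto simp: stratum_def T_def openin_subtopology)
  obtain x y where xy: "x \<in> D1" "y \<in> D2" "insert (e x) (insert (e y) R) \<in> W1 \<inter> W2"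
  proof (rule finset_space_neighbourhoods_meet[OF lim e(2) R(1,2) _ D1(1,2) _ D2(1) _ W(1) _ W(2)])
    show "insert p (insert (e x) R) \<in> W1" if "x \<in> D1" for x
      using in_stratum[of x] that D1(3) U(2) W(3) by (auto simp: R_def)
    show "insert p (insert (e y) R) \<in> W2" if "y \<in> D2" for y
      using in_stratum[of y] that D2(2) V(2) W(4) by (auto simp: R_def)
  qed (use R P D1(3) D2(2) in auto)
  have "x \<in> D - P" "y \<in> D - P" "x \<noteq> y"
    using xy(1,2) D1(3) D2(2,3) by blast+
  then have "insert (e x) (insert (e y) R) \<in> T"
    using fresh R inj_on_eq_iff[OF e(1)] by (auto simp: T_def)
  with xy(3) show ?thesis
    using W(3,4) by blast
qed

lemma not_normal_space_stratum:
  assumes X: "Hausdorff_space X" and D: "uncountable D"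
    and e: "inj_on e D" "e ` D \<subseteq> topspace X" "p \<notin> e ` D"
    and lim: "limitin X e p (inf cofinite (principal D))"
    and d: "2 \<le> d" "d \<le> n"
  shows "\<not> normal_space (stratum X n d)"
proof
  assume "normal_space (stratum X n d)"
  obtain P where P: "finite P" "card P = d - 2" "P \<subseteq> D"
    using infinite_arbitrarily_large[OF uncountable_infinite[OF D]] by blast
  have "uncountable (D - P)"
    by (rule uncountable_minus_countable[OF D countable_finite[OF P(1)]])
  then obtain D1 where D1: "countable D1" "infinite D1" "D1 \<subseteq> D - P"
    using infinite_countable_subset'[OF uncountable_infinite] by blast
  define D2 where "D2 = D - P - D1"
  have D2: "uncountable D2" "D2 \<subseteq> D - P" "D1 \<inter> D2 = {}"
    unfolding D2_def using uncountable_minus_countable[OF \<open>uncountable (D - P)\<close> D1(1)] by auto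
  define C where
    "C E = {z \<in> topspace (stratum X n d). insert p (e ` P) \<subseteq> z \<and> z \<subseteq> insert p (e ` (P \<union> E))}"
    for E
  have "closedin (stratum X n d) (C E)" if "E \<subseteq> D" for E
  proof -
    have "closedin X (insert p (e ` (P \<union> E)))"
      using compactin_imp_closedin[OF X compactin_insert_limit_image[OF lim e(2)]] that P(3)
      by simp
    then show ?thesis
      unfolding C_def using limitin_topspace[OF lim] e(2) P(3) X
      by (intro closedin_stratum_between) (auto intro: closedin_Hausdorff_singleton)
  qed
  then have "closedin (stratum X n d) (C D1)" "closedin (stratum X n d) (C D2)"
    using D1(3) D2(2) by blast+
  moreover have "disjnt (C D1) (C D2)"
  proof -
    have "p \<notin> e ` P"
      using e(3) P(3) by blast
    then have "card (insert p (e ` P)) < d"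
      using P d card_image[OF inj_on_subset[OF e(1) P(3)]] by simp
    moreover have "e ` (P \<union> D1) \<inter> e ` (P \<union> D2) = e ` ((P \<union> D1) \<inter> (P \<union> D2))"
      using inj_on_image_Int[OF e(1), of "P \<union> D1" "P \<union> D2"] D1(3) D2(2) P(3) by auto
    moreover have "(P \<union> D1) \<inter> (P \<union> D2) = P"
      using D2(3) by auto
    ultimately show ?thesis
      unfolding C_def using P(1) by (intro disjnt_stratum_between) auto
  qed
  ultimately obtain U V where UV: "openin (stratum X n d) U" "openin (stratum X n d) V"
    "C D1 \<subseteq> U" "C D2 \<subseteq> V" "disjnt U V"
    using \<open>normal_space _\<close> by (meson normal_space_def)
  have "U \<inter> V \<noteq> {}"
    by (rule stratum_neighbourhoods_meet[OF lim e P(1,3) _ d(2) D1 D2 UV(1) _ UV(2)])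
       (use P d UV(3,4) in \<open>simp_all add: C_def\<close>)
  with UV(5) show False
    by (simp add: disjnt_def)
qed

theorem mainTheorem3:
  fixes X :: "'a topology" and D :: "'b set" and S :: "'a set" and n d :: nat
  assumes "compact_space X" and "Hausdorff_space X"
    and "uncountable D"
    and "S \<subseteq> topspace X"
    and "subtopology X S homeomorphic_space alexandroff (discrete_topology D)"
    and "0 < n" and "2 \<le> d" and "d \<le> n"
  shows "\<not> normal_space (stratum X n d)"
proof -
  obtain p e where "inj_on e D" "e ` D \<subseteq> topspace X" "p \<notin> e ` D"
    "limitin X e p (inf cofinite (principal D))"
    using alexandroff_discrete_embedding[OF assms(5)] .
  then show ?thesis
    by (rule not_normal_space_stratum[OF assms(2,3) _ _ _ _ assms(7,8)])
qed

end
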